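(* Let $L>0$ and let $\alpha,\beta:\mathbb{R}\to\mathbb{R}^2$ be smooth $L$-periodic maps with $\alpha'$ nowhere zero, $\langle\beta,\alpha'\rangle = 0$ and $|\alpha'|^2+|\beta|^2=1$. Let $\gamma(t,s) = \tfrac12(\alpha(s+t)+\alpha(s-t)) + \tfrac12\int_{s-t}^{s+t}\beta(\xi)\,d\xi$, $a=\alpha'+\beta$, $b=\alpha'-\beta$, and let $\psi,\tilde\psi:\mathbb{R}\to\mathbb{R}$ be smooth functions with $a = (\cos\psi,\sin\psi)$ and $b = -(\cos\tilde\psi,\sin\tilde\psi)$. Assume that $\alpha$ has zero rotation index and that the unit tangent map is continuous. Then for any $r$, there do not exist $s_0,s_1$ with $0<s_1-s_0<L$ and $\psi(s_0)=\psi(s_1)=\tilde\psi(r)$; that is, modulo $L$ there is at most one $s$ with $\psi(s) = \tilde\psi(r)$.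
   Context: The rotation index of $\alpha$ is the degree of $\alpha'/|\alpha'|$ as a map from $\mathbb{R}/L\mathbb{Z}$ to the unit circle; when it is zero, $\psi$ and $\tilde\psi$ are $L$-periodic. The unit tangent map is $U(t,s)=\gamma_{,s}(t,s)/|\gamma_{,s}(t,s)|$, defined where $\gamma_{,s}\neq0$ (note $2\gamma_{,s}(t,s)=a(s+t)+b(s-t)$); it is called continuous if for every $t$, $s\mapsto U(t,s)$ extends to a continuous map on all of $\mathbb{R}$. *)

theory Defs
  imports "HOL-Analysis.Analysis"
begin

text \<open>The plane R^2 is modelled by the type complex (with its real inner product).\<close>

definition smooth_fun :: "(real \<Rightarrow> 'a::real_normed_vector) \<Rightarrow> bool" where
  "smooth_fun f \<longleftrightarrow> (\<exists>D :: nat \<Rightarrow> real \<Rightarrow> 'a. D 0 = f \<and>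
      (\<forall>n x. (D n has_vector_derivative D (Suc n) x) (at x)))"

definition signed_integral :: "real \<Rightarrow> real \<Rightarrow> (real \<Rightarrow> complex) \<Rightarrow> complex" where
  "signed_integral u v f = (if u \<le> v then integral {u..v} f else - integral {v..u} f)"

definition gam :: "(real \<Rightarrow> complex) \<Rightarrow> (real \<Rightarrow> complex) \<Rightarrow> real \<Rightarrow> real \<Rightarrow> complex" where
  "gam \<alpha> \<beta> t s = (\<alpha> (s + t) + \<alpha> (s - t)) / 2 + signed_integral (s - t) (s + t) \<beta> / 2"

definition gam_s :: "(real \<Rightarrow> complex) \<Rightarrow> (real \<Rightarrow> complex) \<Rightarrow> real \<Rightarrow> real \<Rightarrow> complex" where
  "gam_s \<alpha> \<beta> t s = vector_derivative (\<lambda>s'. gam \<alpha> \<beta> t s') (at s)"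

text \<open>Unit tangent map U(t,s) (meaningful where gamma_{,s}(t,s) is nonzero).\<close>
definition unit_tangent :: "(real \<Rightarrow> complex) \<Rightarrow> (real \<Rightarrow> complex) \<Rightarrow> real \<Rightarrow> real \<Rightarrow> complex" where
  "unit_tangent \<alpha> \<beta> t s = gam_s \<alpha> \<beta> t s / of_real (norm (gam_s \<alpha> \<beta> t s))"

definition unit_tangent_continuous :: "(real \<Rightarrow> complex) \<Rightarrow> (real \<Rightarrow> complex) \<Rightarrow> bool" where
  "unit_tangent_continuous \<alpha> \<beta> \<longleftrightarrow> (\<forall>t. \<exists>V :: real \<Rightarrow> complex. continuous_on UNIV V \<and>
      (\<forall>s. gam_s \<alpha> \<beta> t s \<noteq> 0 \<longrightarrow> V s = unit_tangent \<alpha> \<beta> t s))"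

text \<open>Rotation index of alpha (period L): degree of alpha'/|alpha'| as a map R/LZ -> S^1,
  computed via a continuous lift theta with alpha'/|alpha'| = cis theta.\<close>
definition rotation_index :: "(real \<Rightarrow> complex) \<Rightarrow> real \<Rightarrow> real" where
  "rotation_index \<alpha> L = (let \<theta> = (SOME \<theta> :: real \<Rightarrow> real. continuous_on UNIV \<theta> \<and>
        (\<forall>t. sgn (vector_derivative \<alpha> (at t)) = cis (\<theta> t)))
     in (\<theta> L - \<theta> 0) / (2 * pi))"

end

theory Submission
  imports Defs
begin

text \<open>Write \<open>2\<alpha>' = cis \<psi> - cis \<psi>t\<close>. Zero rotation index and \<open>\<alpha>' \<noteq> 0\<close> make \<open>\<psi>\<close> and \<open>\<psi>t\<close> \<open>L\<close>-periodic,
  and \<open>\<alpha>(L) = \<alpha>(0)\<close> gives \<open>\<integral>\<^sub>0\<^sup>L cis \<psi> = \<integral>\<^sub>0\<^sup>L cis \<psi>t\<close>. Since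
  \<open>\<gamma>\<^sub>,\<^sub>s(t, s) = (cis \<psi>(s + t) - cis \<psi>t(s - t))/2\<close>, continuity of the unit tangent forbids
  \<open>\<psi>(u) \<equiv> \<psi>t(v) (mod 2\<pi>)\<close> with \<open>\<psi>'(u) > 0 > \<psi>t'(v)\<close>. Hence the ranges of \<open>\<psi>\<close> and \<open>\<psi>t\<close> overlap
  modulo \<open>2\<pi>\<close> in at most an endpoint, so a common value \<open>c\<close> leaves them on opposite sides of \<open>c\<close>
  within one turn. After rotating this arc to be centred, \<open>Re cis \<psi> \<ge> const \<ge> Re cis \<psi>t\<close>, and the
  equal integrals confine \<open>\<psi>\<close> to the two ends of its range, contradicting continuity (if one of
  the functions is constant they force \<open>\<alpha>' = 0\<close> instead). So \<open>\<psi>\<close> and \<open>\<psi>t\<close> never share a value.\<close>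

section \<open>Angles and lifts\<close>

lemma smooth_fun_has_continuous_derivative:
  assumes "smooth_fun f"
  obtains f' where "\<And>x. (f has_vector_derivative f' x) (at x)"
    and "continuous_on UNIV f'" and "continuous_on UNIV f"
proof -
  obtain D where D0: "D 0 = f" and D: "\<And>n x. (D n has_vector_derivative D (Suc n) x) (at x)"
    using assms unfolding smooth_fun_def by blast
  have "continuous_on UNIV (D n)" for n
    by (metis D continuous_at_imp_continuous_on has_vector_derivative_continuous)
  then show ?thesis using that[of "D 1"] D[of 0] D0 by auto
qed

lemma smooth_fun_has_continuous_real_derivative:
  fixes f :: "real \<Rightarrow> real"
  assumes "smooth_fun f"
  obtains f' where "\<And>x. (f has_real_derivative f' x) (at x)"
    and "continuous_on UNIV f'" and "continuous_on UNIV f"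
  using smooth_fun_has_continuous_derivative[OF assms] that
  by (metis has_real_derivative_iff_has_vector_derivative)

lemma cis_diff_eq: "cis A - cis B = 2 * \<i> * cis ((A + B) / 2) * complex_of_real (sin ((A - B) / 2))"
proof -
  have "cis (M + D) - cis (M - D) = 2 * \<i> * cis M * complex_of_real (sin D)" for M D
    by (simp add: complex_eq_iff cos_add sin_add cos_diff sin_diff)
  from this[of "(A + B) / 2" "(A - B) / 2"] show ?thesis by (simp add: field_simps)
qed

lemma cis_eq_cis_imp:
  assumes "cis a = cis b"
  obtains k :: int where "a = b + 2 * pi * k"
proof -
  have "cis (a - b) = 1" using assms by (simp add: cis_divide[symmetric])
  then have "cos (a - b) = 1" by (simp add: complex_eq_iff)
  then obtain k :: int where "a - b = k * 2 * pi" by (auto simp: cos_one_2pi_int)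
  then show ?thesis using that[of k] by (simp add: algebra_simps)
qed

lemma cis_eq_1_if_cos_eq_1: "cos x = 1 \<Longrightarrow> cis x = 1"
  using sin_cos_squared_add[of x] by (simp add: complex_eq_iff)

lemma sin_int_pi_add_mult: "sin (of_int k * pi + x) * sin (of_int k * pi + y) = sin x * sin y"
proof -
  have s: "sin (of_int k * pi) = 0" by (metis mult.commute sin_npi_int)
  have "cos (of_int k * pi) ^ 2 = 1" using s sin_cos_squared_add[of "of_int k * pi"] by simp
  then show ?thesis by (simp add: sin_add s power2_eq_square algebra_simps)
qed

lemma cos_le_cos_of_abs_le:
  assumes "\<bar>y\<bar> \<le> z" "z \<le> pi" shows "cos z \<le> cos y"
  using assms by (metis abs_ge_zero cos_abs_real cos_mono_le_eq order_trans)

lemma cos_le_cos_of_gap: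
  assumes "z / 2 - 2 * pi \<le> w" "w \<le> - z / 2" "0 \<le> z" "z \<le> 2 * pi" shows "cos w \<le> cos (z / 2)"
proof (cases "- pi \<le> w")
  case True
  then show ?thesis using assms cos_le_cos_of_abs_le[of "z / 2" "- w"] by simp
next
  case False
  then have "cos (w + 2 * pi) \<le> cos (z / 2)"
    using assms cos_le_cos_of_abs_le[of "z / 2" "w + 2 * pi"] by simp
  then show ?thesis by simp
qed

lemma continuous_2pi_int_valued_constant:
  fixes f :: "real \<Rightarrow> real"
  assumes cont: "continuous_on UNIV f" and int: "\<And>x. \<exists>k::int. f x = 2 * pi * k"
  shows "f x = f y"
proof -
  have "\<exists>e>0. \<forall>y. y \<in> UNIV \<and> f y \<noteq> f x \<longrightarrow> e \<le> norm (f y - f x)" for x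
  proof (intro exI[of _ "2 * pi"] conjI allI impI)
    fix y assume "y \<in> UNIV \<and> f y \<noteq> f x"
    moreover obtain j k :: int where "f x = 2 * pi * j" "f y = 2 * pi * k" using int by meson
    ultimately have "f y - f x = 2 * pi * of_int (k - j)" "k \<noteq> j" by (auto simp: algebra_simps)
    moreover have "1 \<le> \<bar>of_int (k - j) :: real\<bar>" using \<open>k \<noteq> j\<close> by linarith
    ultimately show "2 * pi \<le> norm (f y - f x)" by (simp add: abs_mult)
  qed simp
  then have "f constant_on UNIV"
    by (intro continuous_discrete_range_constant[OF connected_UNIV cont]) simp
  then obtain c where "\<And>x. f x = c" by (auto simp: constant_on_def)
  then show ?thesis by simp
qed

lemma continuous_lifts_differ_by_constant:
  fixes f g :: "real \<Rightarrow> real"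
  assumes "continuous_on UNIV f" "continuous_on UNIV g" and "\<And>x. cis (f x) = cis (g x)"
  shows "f x - g x = f y - g y"
proof (rule continuous_2pi_int_valued_constant[where f = "\<lambda>x. f x - g x"])
  show "continuous_on UNIV (\<lambda>x. f x - g x)" using assms by (intro continuous_intros)
  show "\<exists>k::int. f x - g x = 2 * pi * k" for x
    using cis_eq_cis_imp[OF assms(3)[of x]] by (metis add_diff_cancel_left')
qed

lemma continuous_lift_shift:
  fixes f :: "real \<Rightarrow> real"
  assumes cont: "continuous_on UNIV f" and per: "\<And>x. cis (f (x + L)) = cis (f x)"
  obtains m :: int where "\<And>x. f (x + L) = f x + 2 * pi * m"
proof -
  have "continuous_on UNIV (\<lambda>x. f (x + L))"
    by (intro continuous_on_compose2[OF cont] continuous_intros) auto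
  from continuous_lifts_differ_by_constant[OF this cont per]
  have "f (x + L) - f x = f (0 + L) - f 0" for x .
  moreover obtain m :: int where "f (0 + L) = f 0 + 2 * pi * m" using cis_eq_cis_imp per by blast
  ultimately show ?thesis using that[of m] by (metis add_diff_cancel_left' add_diff_eq)
qed

lemma continuous_nonvanishing_sign:
  fixes h :: "real \<Rightarrow> real"
  assumes "continuous_on UNIV h" and "\<And>x. h x \<noteq> 0"
  shows "0 < h x \<longleftrightarrow> 0 < h y"
proof -
  have conn: "connected (range h)" using assms(1) by (rule connected_continuous_image[OF _ connected_UNIV])
  have "0 \<notin> range h" using assms(2) by auto
  then show ?thesis
    using connectedD_interval[OF conn, of "h x" "h y" 0] connectedD_interval[OF conn, of "h y" "h x" 0]
      assms(2)[of x] assms(2)[of y] by (auto simp: not_less order_le_less)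
qed

lemma continuous_sin_nonvanishing_oscillation:
  fixes D :: "real \<Rightarrow> real"
  assumes cont: "continuous_on UNIV D" and nz: "\<And>x. sin (D x) \<noteq> 0"
  shows "\<bar>D x - D y\<bar> < pi"
proof -
  have conn: "connected (range D)" using cont by (rule connected_continuous_image[OF _ connected_UNIV])
  have "D b - D a < pi" if "D a \<le> D b" for a b
  proof (rule ccontr)
    assume "\<not> D b - D a < pi"
    define j where "j = \<lceil>D a / pi\<rceil>"
    have "D a / pi \<le> j" "j < D a / pi + 1" unfolding j_def by linarith+
    then have "D a \<le> pi * j" "pi * j < D a + pi" by (auto simp: field_simps)
    then have "pi * j \<in> range D"
      using connectedD_interval[OF conn, of "D a" "D b"] \<open>\<not> D b - D a < pi\<close> by auto
    then show False by (metis nz mult.commute sin_npi_int rangeE)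
  qed
  from this[of x y] this[of y x] show ?thesis by linarith
qed

lemma rotation_index_eq_lift:
  assumes cont: "continuous_on UNIV \<theta>" and lift: "\<And>t. sgn (vector_derivative \<alpha> (at t)) = cis (\<theta> t)"
  shows "rotation_index \<alpha> L = (\<theta> L - \<theta> 0) / (2 * pi)"
proof -
  define \<theta>' where "\<theta>' = (SOME \<theta> :: real \<Rightarrow> real. continuous_on UNIV \<theta> \<and>
        (\<forall>t. sgn (vector_derivative \<alpha> (at t)) = cis (\<theta> t)))"
  have "continuous_on UNIV \<theta>' \<and> (\<forall>t. sgn (vector_derivative \<alpha> (at t)) = cis (\<theta>' t))"
    unfolding \<theta>'_def by (rule someI[of _ \<theta>]) (use assms in auto)
  then have "\<theta>' L - \<theta> L = \<theta>' 0 - \<theta> 0"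
    using continuous_lifts_differ_by_constant[OF _ cont] lift by metis
  then show ?thesis unfolding rotation_index_def Let_def \<theta>'_def[symmetric] by (simp add: algebra_simps)
qed

section \<open>Periodic functions\<close>

lemma periodic_int:
  fixes f :: "real \<Rightarrow> 'a"
  assumes per: "\<And>x. f (x + L) = f x"
  shows "f (x + of_int n * L) = f x"
proof -
  have nat: "f (x + real k * L) = f x" for x k
  proof (induction k)
    case (Suc k)
    then show ?case using per[of "x + real k * L"] by (simp add: algebra_simps)
  qed simp
  show ?thesis
  proof (cases "n \<ge> 0")
    case True
    then show ?thesis using nat[of x "nat n"] by simp
  next
    case False
    then show ?thesis using nat[of "x + of_int n * L" "nat (- n)"] by simp
  qed
qed

lemma periodic_value_in_period:
  fixes f :: "real \<Rightarrow> 'a"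
  assumes per: "\<And>x. f (x + L) = f x" and L: "0 < L"
  obtains y where "y \<in> {0..L}" "f y = f x"
proof -
  define n where "n = \<lfloor>x / L\<rfloor>"
  have "of_int n \<le> x / L" "x / L < of_int n + 1" unfolding n_def by linarith+
  then have "x - of_int n * L \<in> {0..L}" using L by (auto simp: field_simps)
  moreover have "f (x - of_int n * L) = f x" using periodic_int[where f=f, OF per, of "x - of_int n * L" n] by simp
  ultimately show ?thesis using that by blast
qed

lemma periodic_value_after:
  fixes f :: "real \<Rightarrow> 'a"
  assumes per: "\<And>x. f (x + L) = f x" and L: "0 < L"
  obtains x' where "x < x'" "f x' = f y"
proof -
  define n where "n = \<lceil>(x - y) / L\<rceil> + 1"
  have "(x - y) / L < of_int n" unfolding n_def by linarith
  then have "x < y + of_int n * L" using L by (simp add: field_simps)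
  then show ?thesis using that periodic_int[where f=f, OF per] by blast
qed

lemma periodic_attains_extrema:
  fixes f :: "real \<Rightarrow> real"
  assumes cont: "continuous_on UNIV f" and per: "\<And>x. f (x + L) = f x" and L: "0 < L"
  obtains a b where "a \<in> {0..L}" "b \<in> {0..L}" "\<And>x. f a \<le> f x" "\<And>x. f x \<le> f b"
proof -
  have ne: "{0..L} \<noteq> {}" and c: "continuous_on {0..L} f"
    using L continuous_on_subset[OF cont] by auto
  obtain a where "a \<in> {0..L}" and a: "\<And>y. y \<in> {0..L} \<Longrightarrow> f a \<le> f y"
    using continuous_attains_inf[OF compact_Icc ne c] by blast
  obtain b where "b \<in> {0..L}" and b: "\<And>y. y \<in> {0..L} \<Longrightarrow> f y \<le> f b"
    using continuous_attains_sup[OF compact_Icc ne c] by blast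
  show ?thesis
  proof (rule that[OF \<open>a \<in> {0..L}\<close> \<open>b \<in> {0..L}\<close>])
    show "f a \<le> f x" "f x \<le> f b" for x
      using periodic_value_in_period[where f=f, OF per L, of x] a b by metis+
  qed
qed

lemma has_vector_derivative_shift:
  fixes f :: "real \<Rightarrow> 'a::real_normed_vector"
  assumes "(f has_vector_derivative f') (at (x + c))"
  shows "((\<lambda>y. f (y + c)) has_vector_derivative f') (at x)"
proof -
  have "((\<lambda>y. y + c) has_vector_derivative 1) (at x)"
    by (auto intro!: derivative_eq_intros simp: has_real_derivative_iff_has_vector_derivative[symmetric])
  from vector_diff_chain_at[OF this, of f f'] assms show ?thesis by (simp add: o_def)
qed

lemma has_vector_derivative_periodic:
  assumes d: "\<And>x. (f has_vector_derivative f' x) (at x)" and per: "\<And>x. f (x + L) = f x"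
  shows "f' (x + L) = f' x"
proof -
  have "((\<lambda>y. f (y + L)) has_vector_derivative f' (x + L)) (at x)"
    using d[of "x + L"] by (rule has_vector_derivative_shift)
  then have "(f has_vector_derivative f' (x + L)) (at x)" using per by simp
  then show ?thesis using d[of x] by (rule vector_derivative_unique_at)
qed

lemma periodic_derivative_has_integral_0:
  fixes f :: "real \<Rightarrow> 'a::banach"
  assumes d: "\<And>x. (f has_vector_derivative f' x) (at x)" and per: "\<And>x. f (x + L) = f x" and "0 \<le> L"
  shows "(f' has_integral 0) {0..L}"
proof -
  have "(f' has_integral (f L - f 0)) {0..L}"
    by (rule fundamental_theorem_of_calculus) (use \<open>0 \<le> L\<close> d in \<open>auto intro: has_vector_derivative_at_within\<close>)
  then show ?thesis using per[of 0] by simp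
qed

section \<open>Monotone crossings\<close>

lemma first_hitting_point:
  fixes f :: "real \<Rightarrow> real"
  assumes cont: "continuous_on {a..b} f" and "a \<le> b" "f a \<le> l" "l \<le> f b"
  obtains c where "c \<in> {a..b}" "f c = l" "\<And>x. x \<in> {a..<c} \<Longrightarrow> f x < l"
proof -
  define S where "S = {x \<in> {a..b}. f x = l}"
  have "S \<noteq> {}" using IVT'[of f a l b] assms unfolding S_def by auto
  moreover have "bdd_below S" unfolding S_def by (rule bdd_belowI[of _ a]) auto
  moreover have "closed S" unfolding S_def by (rule continuous_closed_preimage_constant[OF cont]) auto
  ultimately have c: "Inf S \<in> S" by (rule closed_contains_Inf)
  have "f x < l" if x: "x \<in> {a..<Inf S}" for x
  proof (rule ccontr)
    assume "\<not> f x < l"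
    then obtain y where "a \<le> y" "y \<le> x" "f y = l"
      using IVT'[of f a l x] assms continuous_on_subset[OF cont, of "{a..x}"] c x
      unfolding S_def by fastforce
    then have "y \<in> S" using c x unfolding S_def by auto
    then have "Inf S \<le> y" by (rule cInf_lower) (simp add: S_def bdd_below_def, auto)
    then show False using \<open>y \<le> x\<close> x by auto
  qed
  then show ?thesis using that[of "Inf S"] c unfolding S_def by blast
qed

lemma last_hitting_point:
  fixes f :: "real \<Rightarrow> real"
  assumes cont: "continuous_on {a..b} f" and "a \<le> b" "f a \<le> l" "l \<le> f b"
  obtains c where "c \<in> {a..b}" "f c = l" "\<And>x. x \<in> {c<..b} \<Longrightarrow> l < f x"
proof -
  define S where "S = {x \<in> {a..b}. f x = l}"
  have "S \<noteq> {}" using IVT'[of f a l b] assms unfolding S_def by auto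
  moreover have "bdd_above S" unfolding S_def by (rule bdd_aboveI[of _ b]) auto
  moreover have "closed S" unfolding S_def by (rule continuous_closed_preimage_constant[OF cont]) auto
  ultimately have c: "Sup S \<in> S" by (rule closed_contains_Sup)
  have "l < f x" if x: "x \<in> {Sup S<..b}" for x
  proof (rule ccontr)
    assume "\<not> l < f x"
    then obtain y where "x \<le> y" "y \<le> b" "f y = l"
      using IVT'[of f x l b] assms continuous_on_subset[OF cont, of "{x..b}"] c x
      unfolding S_def by fastforce
    then have "y \<in> S" using c x unfolding S_def by auto
    then have "y \<le> Sup S" by (rule cSup_upper) (simp add: S_def bdd_above_def, auto)
    then show False using \<open>x \<le> y\<close> x by auto
  qed
  then show ?thesis using that[of "Sup S"] c unfolding S_def by blast
qed

text \<open>Between the last visit to \<open>l1\<close> and the first visit to \<open>l2\<close> the function stays strictly between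
  the two levels, and the mean value theorem applies there.\<close>

lemma exists_pos_deriv_between_levels:
  fixes f f' :: "real \<Rightarrow> real"
  assumes der: "\<And>x. (f has_real_derivative f' x) (at x)"
    and "x1 \<le> x2" "f x1 \<le> l1" "l1 < l2" "l2 \<le> f x2"
  obtains \<xi> where "0 < f' \<xi>" "l1 < f \<xi>" "f \<xi> < l2"
proof -
  have cont: "continuous_on S f" for S
    by (meson DERIV_continuous continuous_at_imp_continuous_on der)
  obtain c where c: "c \<in> {x1..x2}" "f c = l2" and below: "\<And>x. x \<in> {x1..<c} \<Longrightarrow> f x < l2"
    using first_hitting_point[OF cont, of x1 x2 l2] assms by auto
  obtain a where a: "a \<in> {x1..c}" "f a = l1" and above: "\<And>x. x \<in> {a<..c} \<Longrightarrow> l1 < f x"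
    using last_hitting_point[OF cont, of x1 c l1] assms c by auto
  have "a \<noteq> c" using a c \<open>l1 < l2\<close> by auto
  then have "a < c" using a by simp
  then obtain z where z: "a < z" "z < c" "f c - f a = (c - a) * f' z"
    using MVT2[of a c f f'] der by blast
  have "0 < (c - a) * f' z" using z a c \<open>l1 < l2\<close> by simp
  then have "0 < f' z" by (rule zero_less_mult_pos) (use \<open>a < c\<close> in simp)
  moreover have "l1 < f z" "f z < l2" using above[of z] below[of z] z a by auto
  ultimately show ?thesis using that by blast
qed

text \<open>Pick an interval on which \<open>\<psi>\<close> increases through values in \<open>(lo, hi)\<close>, then a point where
  \<open>\<phi>\<close> decreases through a value in its image.\<close>

lemma exists_opposite_monotone_crossing:
  fixes \<psi> \<phi> d\<psi> d\<phi> :: "real \<Rightarrow> real"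
  assumes d\<psi>: "\<And>x. (\<psi> has_real_derivative d\<psi> x) (at x)" and cd\<psi>: "continuous_on UNIV d\<psi>"
    and d\<phi>: "\<And>x. (\<phi> has_real_derivative d\<phi> x) (at x)"
    and "lo < hi"
    and "x1 \<le> x2" "\<psi> x1 \<le> lo" "hi \<le> \<psi> x2"
    and "y1 \<le> y2" "hi \<le> \<phi> y1" "\<phi> y2 \<le> lo"
  obtains u v where "\<psi> u = \<phi> v" "0 < d\<psi> u" "d\<phi> v < 0"
proof -
  have c\<psi>: "continuous_on S \<psi>" for S
    by (meson DERIV_continuous continuous_at_imp_continuous_on d\<psi>)
  obtain \<xi> where \<xi>: "0 < d\<psi> \<xi>" "lo < \<psi> \<xi>" "\<psi> \<xi> < hi"
    using exists_pos_deriv_between_levels[OF d\<psi> \<open>x1 \<le> x2\<close> \<open>\<psi> x1 \<le> lo\<close> \<open>lo < hi\<close> \<open>hi \<le> \<psi> x2\<close>] .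
  define U where "U = {u. 0 < d\<psi> u \<and> lo < \<psi> u \<and> \<psi> u < hi}"
  have "open U" unfolding U_def
    using cd\<psi> c\<psi> by (intro open_Collect_conj open_Collect_less continuous_on_const) auto
  moreover have "\<xi> \<in> U" using \<xi> unfolding U_def by simp
  ultimately obtain \<delta> where "0 < \<delta>" and \<delta>: "ball \<xi> \<delta> \<subseteq> U"
    by (meson open_contains_ball)
  define a where "a = \<xi> - \<delta>/2"
  define b where "b = \<xi> + \<delta>/2"
  have "{a..b} \<subseteq> ball \<xi> \<delta>"
    using \<open>0 < \<delta>\<close> unfolding a_def b_def by (auto simp: dist_real_def)
  then have ab: "0 < d\<psi> u" "lo < \<psi> u" "\<psi> u < hi" if "u \<in> {a..b}" for u
    using \<delta> that unfolding U_def by auto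
  have "a < b" using \<open>0 < \<delta>\<close> unfolding a_def b_def by simp
  then have "\<psi> a < \<psi> b"
  proof (rule DERIV_pos_imp_increasing)
    show "\<exists>y. (\<psi> has_real_derivative y) (at x) \<and> 0 < y" if "a \<le> x" "x \<le> b" for x
      using ab(1)[of x] d\<psi>[of x] that by (intro exI[of _ "d\<psi> x"]) simp
  qed
  moreover have "- \<phi> y1 \<le> - \<psi> b" "- \<psi> a \<le> - \<phi> y2"
    using ab[of a] ab[of b] \<open>a < b\<close> assms by auto
  moreover have "((\<lambda>x. - \<phi> x) has_real_derivative - d\<phi> x) (at x)" for x
    using d\<phi> by (rule DERIV_minus)
  ultimately obtain \<eta> where \<eta>: "0 < - d\<phi> \<eta>" "- \<psi> b < - \<phi> \<eta>" "- \<phi> \<eta> < - \<psi> a"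
    using exists_pos_deriv_between_levels[of "\<lambda>x. - \<phi> x" "\<lambda>x. - d\<phi> x" y1 y2 "- \<psi> b" "- \<psi> a"]
      \<open>y1 \<le> y2\<close> by (metis neg_less_iff_less)
  then obtain u where "u \<in> {a..b}" "\<psi> u = \<phi> \<eta>"
    using IVT'[OF _ _ _ c\<psi>, of a "\<phi> \<eta>" b] \<open>a < b\<close> by auto
  then show ?thesis using that[of u \<eta>] ab \<eta> by auto
qed

text \<open>An overlap of the two ranges, shifted by \<open>2\<pi>k\<close>, would produce an opposite monotone crossing.\<close>

lemma periodic_ranges_no_overlap:
  fixes \<psi> \<phi> d\<psi> d\<phi> :: "real \<Rightarrow> real"
  assumes L: "0 < L"
    and d\<psi>: "\<And>x. (\<psi> has_real_derivative d\<psi> x) (at x)" and cd\<psi>: "continuous_on UNIV d\<psi>"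
    and d\<phi>: "\<And>x. (\<phi> has_real_derivative d\<phi> x) (at x)"
    and per\<psi>: "\<And>x. \<psi> (x + L) = \<psi> x" and per\<phi>: "\<And>x. \<phi> (x + L) = \<phi> x"
    and no_crossing: "\<And>u v. \<psi> u = \<phi> v + 2 * pi * of_int k \<Longrightarrow> 0 < d\<psi> u \<Longrightarrow> d\<phi> v < 0 \<Longrightarrow> False"
    and \<psi>_range: "\<And>x. \<psi> a1 \<le> \<psi> x \<and> \<psi> x \<le> \<psi> b1" "\<psi> a1 < \<psi> b1"
    and \<phi>_range: "\<And>x. \<phi> a2 \<le> \<phi> x \<and> \<phi> x \<le> \<phi> b2" "\<phi> a2 < \<phi> b2"
  shows "\<psi> b1 \<le> \<phi> a2 + 2 * pi * of_int k \<or> \<phi> b2 + 2 * pi * of_int k \<le> \<psi> a1"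
proof (rule ccontr)
  assume overlap: "\<not> ?thesis"
  define lo where "lo = max (\<psi> a1) (\<phi> a2 + 2 * pi * of_int k)"
  define hi where "hi = min (\<psi> b1) (\<phi> b2 + 2 * pi * of_int k)"
  obtain x2 where "a1 < x2" "\<psi> x2 = \<psi> b1" using periodic_value_after[where f = \<psi>, OF per\<psi> L] by blast
  obtain y2 where "b2 < y2" "\<phi> y2 = \<phi> a2" using periodic_value_after[where f = \<phi>, OF per\<phi> L] by blast
  have "((\<lambda>x. \<phi> x + 2 * pi * of_int k) has_real_derivative d\<phi> x) (at x)" for x
    using DERIV_add[OF d\<phi> DERIV_const] by simp
  then obtain u v where "\<psi> u = \<phi> v + 2 * pi * of_int k" "0 < d\<psi> u" "d\<phi> v < 0"
  proof (rule exists_opposite_monotone_crossing[OF d\<psi> cd\<psi>, of "\<lambda>x. \<phi> x + 2 * pi * of_int k" d\<phi> lo hi a1 x2 b2 y2])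
    show "lo < hi" using overlap \<psi>_range(2) \<phi>_range(2) unfolding lo_def hi_def by auto
  qed (use \<open>a1 < x2\<close> \<open>\<psi> x2 = \<psi> b1\<close> \<open>b2 < y2\<close> \<open>\<phi> y2 = \<phi> a2\<close> in \<open>auto simp: lo_def hi_def\<close>)
  then show False by (rule no_crossing)
qed

section \<open>Equal integrals of \<open>cis\<close>\<close>

lemma equal_cis_integrals_force_cos:
  fixes f g :: "real \<Rightarrow> real"
  assumes "a < b"
    and f: "((\<lambda>x. cis (f x)) has_integral I) {a..b}" and g: "((\<lambda>x. cis (g x)) has_integral I) {a..b}"
    and cf: "continuous_on {a..b} f" and cg: "continuous_on {a..b} g"
    and lower: "\<And>x. x \<in> {a..b} \<Longrightarrow> C \<le> cos (f x - \<kappa>)"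
    and upper: "\<And>x. x \<in> {a..b} \<Longrightarrow> cos (g x - \<kappa>) \<le> C"
    and x: "x \<in> {a..b}"
  shows "cos (f x - \<kappa>) = C" and "cos (g x - \<kappa>) = C"
proof -
  have re: "((\<lambda>x. cos (h x - \<kappa>)) has_integral Re (cis (- \<kappa>) * I)) {a..b}"
    if "((\<lambda>x. cis (h x)) has_integral I) {a..b}" for h
  proof -
    from has_integral_linear[OF has_integral_mult_right[OF that, of "cis (- \<kappa>)"] bounded_linear_Re]
    show ?thesis by (simp add: comp_def cis_mult)
  qed
  have const: "((\<lambda>x. C) has_integral (b - a) * C) {a..b}"
    using has_integral_const_real[of C a b] \<open>a < b\<close> by simp
  define J where "J = Re (cis (- \<kappa>) * I) - (b - a) * C"
  have iF: "((\<lambda>x. cos (f x - \<kappa>) - C) has_integral J) {a..b}"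
    unfolding J_def by (rule has_integral_diff[OF re[OF f] const])
  have iG: "((\<lambda>x. C - cos (g x - \<kappa>)) has_integral - J) {a..b}"
    unfolding J_def using has_integral_diff[OF const re[OF g]] by simp
  have "0 \<le> J" using has_integral_nonneg[OF iF] lower by simp
  moreover have "0 \<le> - J" using has_integral_nonneg[OF iG] upper by simp
  ultimately have "J = 0" by simp
  have vanish: "h x = 0"
    if "continuous_on {a..b} h" "\<And>x. x \<in> {a..b} \<Longrightarrow> 0 \<le> h x" "(h has_integral 0) {a..b}"
    for h :: "real \<Rightarrow> real"
    using has_integral_0_cbox_imp_0[of a b h x] that x \<open>a < b\<close> by (auto simp: cbox_interval box_real)
  have "continuous_on {a..b} (\<lambda>x. cos (f x - \<kappa>) - C)" using cf by (intro continuous_intros)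
  then have "cos (f x - \<kappa>) - C = 0"
    by (rule vanish) (use iF \<open>J = 0\<close> lower in simp_all)
  moreover have "continuous_on {a..b} (\<lambda>x. C - cos (g x - \<kappa>))" using cg by (intro continuous_intros)
  then have "C - cos (g x - \<kappa>) = 0"
    by (rule vanish) (use iG \<open>J = 0\<close> upper in simp_all)
  ultimately show "cos (f x - \<kappa>) = C" "cos (g x - \<kappa>) = C" by simp_all
qed

lemma equal_cis_integrals_constant:
  fixes f g :: "real \<Rightarrow> real"
  assumes "a < b"
    and f: "((\<lambda>x. cis (f x)) has_integral I) {a..b}" and g: "((\<lambda>x. cis (g x)) has_integral I) {a..b}"
    and cg: "continuous_on {a..b} g" and const: "\<And>x. x \<in> {a..b} \<Longrightarrow> f x = c"
    and x: "x \<in> {a..b}"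
  shows "cis (g x) = cis c"
proof -
  have "continuous_on {a..b} f"
    by (rule continuous_on_eq[OF continuous_on_const[of _ c]]) (simp add: const)
  then have "cos (g x - c) = 1"
    by (rule equal_cis_integrals_force_cos(2)[OF \<open>a < b\<close> f g _ cg _ _ x]) (simp_all add: const)
  then have "cis (g x - c) = 1" by (rule cis_eq_1_if_cos_eq_1)
  then show ?thesis by (simp add: cis_divide[symmetric] divide_eq_1_iff)
qed

lemma equal_cis_integrals_nonconstant:
  fixes f g :: "real \<Rightarrow> real"
  assumes "a < b"
    and f: "((\<lambda>x. cis (f x)) has_integral I) {a..b}" and g: "((\<lambda>x. cis (g x)) has_integral I) {a..b}"
    and cg: "continuous_on {a..b} g" and ne: "\<And>x. x \<in> {a..b} \<Longrightarrow> cis (f x) \<noteq> cis (g x)"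
    and range: "\<And>x. f m \<le> f x \<and> f x \<le> f M"
  shows "f m < f M"
proof (rule ccontr)
  assume "\<not> f m < f M"
  then have "f x = f a" for x using range[of x] range[of a] by linarith
  moreover have "a \<in> {a..b}" using \<open>a < b\<close> by simp
  ultimately have "cis (g a) = cis (f a)" by (intro equal_cis_integrals_constant[OF \<open>a < b\<close> f g cg])
  then show False using ne[OF \<open>a \<in> {a..b}\<close>] by simp
qed

text \<open>The rotation by \<open>c + P/2\<close> makes \<open>cos (f - c - P/2) \<ge> cos (P/2) \<ge> cos (g - c - P/2)\<close>, so equality
  of the integrals pins \<open>f\<close> to the two endpoints \<open>c, c + P\<close>, which contradicts connectedness.\<close>

lemma equal_cis_integrals_separated_ranges:
  fixes f g :: "real \<Rightarrow> real"
  assumes "a < b"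
    and f: "((\<lambda>x. cis (f x)) has_integral I) {a..b}" and g: "((\<lambda>x. cis (g x)) has_integral I) {a..b}"
    and cf: "continuous_on {a..b} f" and cg: "continuous_on {a..b} g"
    and f_range: "\<And>x. x \<in> {a..b} \<Longrightarrow> c \<le> f x \<and> f x \<le> c + P"
    and g_range: "\<And>x. x \<in> {a..b} \<Longrightarrow> c + P - 2 * pi \<le> g x \<and> g x \<le> c"
    and P: "0 < P" "P \<le> 2 * pi"
    and x0: "x0 \<in> {a..b}" "f x0 = c" and x1: "x1 \<in> {a..b}" "f x1 = c + P"
  shows False
proof -
  have conn: "connected (f ` {a..b})" using cf by (rule connected_continuous_image) simp
  have "c \<in> f ` {a..b}" "c + P \<in> f ` {a..b}" using x0 x1 by (metis image_eqI)+
  then have "c + P / 2 \<in> f ` {a..b}" by (rule connectedD_interval[OF conn]) (use P in simp_all)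
  then obtain z where z: "z \<in> {a..b}" "f z = c + P / 2" by auto
  have "cos (f z - (c + P / 2)) = cos (P / 2)"
  proof (rule equal_cis_integrals_force_cos(1)[OF \<open>a < b\<close> f g cf cg _ _ z(1)])
    fix x assume "x \<in> {a..b}"
    note f_range[OF this] g_range[OF this]
    then have "\<bar>f x - (c + P / 2)\<bar> \<le> P / 2" "P / 2 - 2 * pi \<le> g x - (c + P / 2)" "g x - (c + P / 2) \<le> - P / 2"
      by (simp_all only: abs_le_iff) linarith+
    then show "cos (P / 2) \<le> cos (f x - (c + P / 2))" "cos (g x - (c + P / 2)) \<le> cos (P / 2)"
      using P by (simp_all add: cos_le_cos_of_abs_le cos_le_cos_of_gap)
  qed
  then have "cos 0 = cos (P / 2)" using z by simp
  moreover have "0 \<le> P / 2" "P / 2 \<le> pi" using P by simp_all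
  ultimately have "0 = P / 2" using cos_inj_pi[of 0 "P / 2"] by simp
  then show False using P by simp
qed

lemma periodic_angles_no_common_value:
  fixes \<psi> \<phi> d\<psi> d\<phi> :: "real \<Rightarrow> real"
  assumes L: "0 < L"
    and d\<psi>: "\<And>x. (\<psi> has_real_derivative d\<psi> x) (at x)" and cd\<psi>: "continuous_on UNIV d\<psi>"
    and d\<phi>: "\<And>x. (\<phi> has_real_derivative d\<phi> x) (at x)"
    and per\<psi>: "\<And>x. \<psi> (x + L) = \<psi> x" and per\<phi>: "\<And>x. \<phi> (x + L) = \<phi> x"
    and int\<psi>: "((\<lambda>x. cis (\<psi> x)) has_integral I) {0..L}" and int\<phi>: "((\<lambda>x. cis (\<phi> x)) has_integral I) {0..L}"
    and ne: "\<And>x. cis (\<psi> x) \<noteq> cis (\<phi> x)"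
    and no_crossing: "\<And>u v k. \<psi> u = \<phi> v + 2 * pi * of_int k \<Longrightarrow> 0 < d\<psi> u \<Longrightarrow> d\<phi> v < 0 \<Longrightarrow> False"
  shows "\<psi> s \<noteq> \<phi> r"
proof
  assume common: "\<psi> s = \<phi> r"
  have c\<psi>: "continuous_on S \<psi>" and c\<phi>: "continuous_on S \<phi>" for S
    by (meson DERIV_continuous continuous_at_imp_continuous_on d\<psi> d\<phi>)+
  obtain a1 b1 where ab1: "a1 \<in> {0..L}" "b1 \<in> {0..L}" and \<psi>_range: "\<And>x. \<psi> a1 \<le> \<psi> x \<and> \<psi> x \<le> \<psi> b1"
    using periodic_attains_extrema[OF c\<psi> per\<psi> L] by metis
  obtain a2 b2 where ab2: "a2 \<in> {0..L}" "b2 \<in> {0..L}" and \<phi>_range: "\<And>x. \<phi> a2 \<le> \<phi> x \<and> \<phi> x \<le> \<phi> b2"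
    using periodic_attains_extrema[OF c\<phi> per\<phi> L] by metis
  have nonconst\<psi>: "\<psi> a1 < \<psi> b1"
    using equal_cis_integrals_nonconstant[OF L int\<psi> int\<phi> c\<phi> ne \<psi>_range] .
  have nonconst\<phi>: "\<phi> a2 < \<phi> b2"
    using equal_cis_integrals_nonconstant[OF L int\<phi> int\<psi> c\<psi> ne[symmetric] \<phi>_range] .
  have gap: "\<psi> b1 \<le> \<phi> a2 + 2 * pi * of_int k \<or> \<phi> b2 + 2 * pi * of_int k \<le> \<psi> a1" for k
    using periodic_ranges_no_overlap[OF L d\<psi> cd\<psi> d\<phi> per\<psi> per\<phi> no_crossing[of _ _ k]
        \<psi>_range nonconst\<psi> \<phi>_range nonconst\<phi>] .
  consider "\<psi> b1 = \<psi> s" "\<phi> a2 = \<psi> s" | "\<phi> b2 = \<psi> s" "\<psi> a1 = \<psi> s"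
    using gap[of 0] \<psi>_range[of s] \<phi>_range[of r] common by fastforce
  then show False
  proof cases
    case 1
    then have low: "\<phi> b2 - 2 * pi \<le> \<psi> a1" using gap[of "-1"] pi_gt_zero by auto
    then have width: "\<phi> b2 - \<psi> s \<le> 2 * pi" using \<psi>_range[of s] by linarith
    show False
      by (rule equal_cis_integrals_separated_ranges[OF L int\<phi> int\<psi> c\<phi> c\<psi>, of "\<psi> s" "\<phi> b2 - \<psi> s" a2 b2])
        (use 1 ab2 \<psi>_range \<phi>_range low width nonconst\<phi> in \<open>auto intro: order_trans\<close>)
  next
    case 2
    then have low: "\<psi> b1 - 2 * pi \<le> \<phi> a2" using gap[of 1] pi_gt_zero by auto
    then have width: "\<psi> b1 - \<psi> s \<le> 2 * pi" using \<phi>_range[of r] common by linarith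
    show False
      by (rule equal_cis_integrals_separated_ranges[OF L int\<psi> int\<phi> c\<psi> c\<phi>, of "\<psi> s" "\<psi> b1 - \<psi> s" a1 b1])
        (use 2 ab1 \<psi>_range \<phi>_range low width nonconst\<psi> in \<open>auto intro: order_trans\<close>)
  qed
qed

section \<open>The curve and its unit tangent\<close>

lemma gam_s_eq:
  fixes \<alpha> \<beta> \<alpha>' :: "real \<Rightarrow> complex"
  assumes d\<alpha>: "\<And>x. (\<alpha> has_vector_derivative \<alpha>' x) (at x)" and c\<beta>: "continuous_on UNIV \<beta>"
  shows "gam_s \<alpha> \<beta> t s = ((\<alpha>' (s + t) + \<beta> (s + t)) + (\<alpha>' (s - t) - \<beta> (s - t))) / 2"
proof -
  define R where "R = \<bar>s\<bar> + \<bar>t\<bar> + 2"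
  define F where "F x = integral {-R..x} \<beta>" for x
  have c\<beta>': "continuous_on {a..b} \<beta>" for a b by (rule continuous_on_subset[OF c\<beta>]) auto
  have dF: "(F has_vector_derivative \<beta> y) (at y)" if "-R < y" "y < R" for y
    using integral_has_vector_derivative[OF c\<beta>', of y "-R" R] that at_within_Icc_at[of "-R" y R]
    unfolding F_def by auto
  have int: "\<beta> integrable_on {a..b}" for a b by (rule integrable_continuous_interval[OF c\<beta>'])
  have signed: "signed_integral p q \<beta> = F q - F p" if "-R \<le> p" "-R \<le> q" for p q
  proof (cases "p \<le> q")
    case True
    have "integral {-R..p} \<beta> + integral {p..q} \<beta> = integral {-R..q} \<beta>"
      by (rule Henstock_Kurzweil_Integration.integral_combine[OF that(1) True int])
    then show ?thesis using True unfolding signed_integral_def F_def by (simp add: algebra_simps)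
  next
    case False
    have "integral {-R..q} \<beta> + integral {q..p} \<beta> = integral {-R..p} \<beta>"
      by (rule Henstock_Kurzweil_Integration.integral_combine[OF that(2) _ int]) (use False in auto)
    then show ?thesis using False unfolding signed_integral_def F_def by (simp add: algebra_simps)
  qed
  define G where "G y = (\<alpha> (y + t) + \<alpha> (y - t)) / 2 + (F (y + t) - F (y - t)) / 2" for y
  have eq: "G y = gam \<alpha> \<beta> t y" if "y \<in> ball s 1" for y
  proof -
    have "-R \<le> y - t" "-R \<le> y + t" using that unfolding R_def by (auto simp: dist_real_def)
    then show ?thesis unfolding G_def gam_def using signed[of "y - t" "y + t"] by simp
  qed
  have dG: "(G has_vector_derivative ((\<alpha>' (s + t) + \<beta> (s + t)) + (\<alpha>' (s - t) - \<beta> (s - t))) / 2) (at s)"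
  proof -
    have R: "-R < s + t" "s + t < R" "-R < s - t" "s - t < R" unfolding R_def by auto
    have "((\<lambda>y. \<alpha> (y + t)) has_vector_derivative \<alpha>' (s + t)) (at s)"
      using d\<alpha>[of "s + t"] by (rule has_vector_derivative_shift)
    moreover have "((\<lambda>y. \<alpha> (y - t)) has_vector_derivative \<alpha>' (s - t)) (at s)"
      using has_vector_derivative_shift[of \<alpha> "\<alpha>' (s - t)" s "- t"] d\<alpha>[of "s - t"] by simp
    moreover have "((\<lambda>y. F (y + t)) has_vector_derivative \<beta> (s + t)) (at s)"
      using dF[OF R(1,2)] by (rule has_vector_derivative_shift)
    moreover have "((\<lambda>y. F (y - t)) has_vector_derivative \<beta> (s - t)) (at s)"
      using has_vector_derivative_shift[of F "\<beta> (s - t)" s "- t"] dF[OF R(3,4)] by simp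
    ultimately have "(G has_vector_derivative (\<alpha>' (s + t) + \<alpha>' (s - t)) / 2 + (\<beta> (s + t) - \<beta> (s - t)) / 2) (at s)"
      unfolding G_def by (intro has_vector_derivative_add has_vector_derivative_divide has_vector_derivative_diff)
    then show ?thesis by (rule has_vector_derivative_eq_rhs) (simp add: field_simps)
  qed
  have "((\<lambda>y. gam \<alpha> \<beta> t y) has_vector_derivative
      ((\<alpha>' (s + t) + \<beta> (s + t)) + (\<alpha>' (s - t) - \<beta> (s - t))) / 2) (at s)"
    by (rule has_vector_derivative_transform_within_open[OF dG, of "ball s 1"]) (use eq in auto)
  then show ?thesis unfolding gam_s_def by (rule vector_derivative_at)
qed

lemma unit_tangent_eq_sgn_sin:
  assumes gs: "gam_s \<alpha> \<beta> t s = (cis A - cis B) / 2" and nz: "sin ((A - B) / 2) \<noteq> 0"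
  shows "gam_s \<alpha> \<beta> t s \<noteq> 0"
    and "unit_tangent \<alpha> \<beta> t s = \<i> * cis ((A + B) / 2) * complex_of_real (sgn (sin ((A - B) / 2)))"
proof -
  define M where "M = (A + B) / 2"
  define D where "D = (A - B) / 2"
  have gs': "gam_s \<alpha> \<beta> t s = \<i> * cis M * complex_of_real (sin D)"
    unfolding gs cis_diff_eq M_def D_def by simp
  then show "gam_s \<alpha> \<beta> t s \<noteq> 0" using nz unfolding D_def by simp
  have "norm (gam_s \<alpha> \<beta> t s) = \<bar>sin D\<bar>" unfolding gs' by (simp add: norm_mult)
  then show "unit_tangent \<alpha> \<beta> t s = \<i> * cis M * complex_of_real (sgn (sin D))"
    unfolding unit_tangent_def gs' using nz by (simp add: D_def sgn_real_def)
qed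

lemma sin_half_sign_change:
  fixes g :: "real \<Rightarrow> real"
  assumes der: "(g has_real_derivative g') (at s)" and "0 < g'" and gs: "g s = 2 * pi * of_int k"
    and "0 < e"
  obtains h where "0 < h" "h < e" "sin (g (s + h) / 2) * sin (g (s - h) / 2) < 0"
proof -
  obtain d1 where "0 < d1" and d1: "\<And>h. 0 < h \<Longrightarrow> h < d1 \<Longrightarrow> g s < g (s + h)"
    using DERIV_pos_inc_right[OF der \<open>0 < g'\<close>] by blast
  obtain d2 where "0 < d2" and d2: "\<And>h. 0 < h \<Longrightarrow> h < d2 \<Longrightarrow> g (s - h) < g s"
    using DERIV_pos_inc_left[OF der \<open>0 < g'\<close>] by blast
  have "isCont g s" using der by (rule DERIV_isCont)
  moreover have "0 < 2 * pi" by simp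
  ultimately obtain d3 where "0 < d3" and d3: "\<And>y. dist y s < d3 \<Longrightarrow> dist (g y) (g s) < 2 * pi"
    unfolding continuous_at_eps_delta by blast
  define h where "h = Min {d1, d2, d3, e} / 2"
  have h: "0 < h" "h < d1" "h < d2" "h < d3" "h < e"
    unfolding h_def using \<open>0 < d1\<close> \<open>0 < d2\<close> \<open>0 < d3\<close> \<open>0 < e\<close> by auto
  define x where "x = (g (s + h) - 2 * pi * k) / 2"
  define y where "y = (g (s - h) - 2 * pi * k) / 2"
  have "0 < x" "x < pi" "- pi < y" "y < 0"
    using d1[OF h(1,2)] d2[OF h(1,3)] d3[of "s + h"] d3[of "s - h"] h gs
    unfolding x_def y_def by (auto simp: dist_real_def)
  then have "0 < sin x" "sin y < 0" using sin_gt_zero[of x] sin_gt_zero[of "- y"] by auto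
  have "g (s + h) / 2 = of_int k * pi + x" "g (s - h) / 2 = of_int k * pi + y"
    unfolding x_def y_def by (auto simp: field_simps)
  then have "sin (g (s + h) / 2) * sin (g (s - h) / 2) = sin x * sin y"
    by (simp only: sin_int_pi_add_mult)
  also have "\<dots> < 0" using \<open>0 < sin x\<close> \<open>sin y < 0\<close> by (rule mult_pos_neg)
  finally show ?thesis using that h by blast
qed

text \<open>On a characteristic through a point where \<open>\<psi>\<close> increases and \<open>\<phi>\<close> decreases through the same
  angle mod \<open>2\<pi>\<close>, the tangent \<open>\<gamma>\<^sub>,\<^sub>s\<close> vanishes to first order and flips direction, so the unit tangent
  would jump by \<open>\<pi>\<close>.\<close>

lemma unit_tangent_continuous_no_opposite_crossing:
  fixes \<psi> \<phi> d\<psi> d\<phi> :: "real \<Rightarrow> real"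
  assumes cont: "unit_tangent_continuous \<alpha> \<beta>"
    and gs: "\<And>t s. gam_s \<alpha> \<beta> t s = (cis (\<psi> (s + t)) - cis (\<phi> (s - t))) / 2"
    and d\<psi>: "\<And>x. (\<psi> has_real_derivative d\<psi> x) (at x)"
    and d\<phi>: "\<And>x. (\<phi> has_real_derivative d\<phi> x) (at x)"
    and cross: "\<psi> u = \<phi> v + 2 * pi * of_int k" "0 < d\<psi> u" "d\<phi> v < 0"
  shows False
proof -
  define t where "t = (u - v) / 2"
  define s0 where "s0 = (u + v) / 2"
  have st: "s0 + t = u" "s0 - t = v" unfolding t_def s0_def by (auto simp: field_simps)
  obtain V where cV: "continuous_on UNIV V"
    and V: "\<And>s. gam_s \<alpha> \<beta> t s \<noteq> 0 \<Longrightarrow> V s = unit_tangent \<alpha> \<beta> t s"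
    using cont unfolding unit_tangent_continuous_def by blast
  define g where "g s = \<psi> (s + t) - \<phi> (s - t)" for s
  define M where "M s = (\<psi> (s + t) + \<phi> (s - t)) / 2" for s
  have "((\<lambda>s. \<psi> (s + t)) has_real_derivative d\<psi> (s0 + t)) (at s0)"
    "((\<lambda>s. \<phi> (s + - t)) has_real_derivative d\<phi> (s0 - t)) (at s0)"
    using DERIV_shift[of \<psi> "d\<psi> (s0 + t)" s0 t] DERIV_shift[of \<phi> "d\<phi> (s0 - t)" s0 "- t"] d\<psi> d\<phi> by auto
  from DERIV_diff[OF this] have der_g: "(g has_real_derivative d\<psi> (s0 + t) - d\<phi> (s0 - t)) (at s0)"
    unfolding g_def by simp
  have "0 < d\<psi> (s0 + t) - d\<phi> (s0 - t)" "g s0 = 2 * pi * of_int k"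
    using cross unfolding st g_def by auto
  note sign_change = sin_half_sign_change[OF der_g this]
  have c\<psi>: "continuous_on UNIV \<psi>" and c\<phi>: "continuous_on UNIV \<phi>"
    by (meson DERIV_continuous continuous_at_imp_continuous_on d\<psi> d\<phi>)+
  define \<Phi> where "\<Phi> s = - \<i> * cis (- M s) * V s" for s
  have "continuous_on UNIV \<Phi>" unfolding \<Phi>_def M_def
    by (intro continuous_intros cV continuous_on_compose2[OF c\<psi>] continuous_on_compose2[OF c\<phi>]) auto
  then obtain d where "0 < d" and d: "\<And>s. dist s s0 < d \<Longrightarrow> dist (\<Phi> s) (\<Phi> s0) < 1"
    unfolding continuous_on_eq_continuous_at[OF open_UNIV] continuous_at_eps_delta
    by (meson UNIV_I zero_less_one)
  have \<Phi>: "\<Phi> s = complex_of_real (sgn (sin (g s / 2)))" if "sin (g s / 2) \<noteq> 0" for s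
  proof -
    have nz: "sin ((\<psi> (s + t) - \<phi> (s - t)) / 2) \<noteq> 0" using that unfolding g_def .
    have "V s = \<i> * cis (M s) * complex_of_real (sgn (sin (g s / 2)))"
      using unit_tangent_eq_sgn_sin[OF gs nz] V unfolding M_def g_def by simp
    then show ?thesis unfolding \<Phi>_def by (simp add: algebra_simps cis_mult)
  qed
  obtain h where "0 < h" "h < d" "sin (g (s0 + h) / 2) * sin (g (s0 - h) / 2) < 0"
    using sign_change[OF \<open>0 < d\<close>] .
  then have "\<Phi> (s0 + h) = - \<Phi> (s0 - h)" "norm (\<Phi> (s0 - h)) = 1"
    using \<Phi>[of "s0 + h"] \<Phi>[of "s0 - h"] by (auto simp: sgn_real_def mult_less_0_iff)
  then have "dist (\<Phi> (s0 + h)) (\<Phi> (s0 - h)) = 2" by (simp add: dist_norm)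
  moreover have "dist (\<Phi> (s0 + h)) (\<Phi> s0) < 1" "dist (\<Phi> (s0 - h)) (\<Phi> s0) < 1"
    using d[of "s0 + h"] d[of "s0 - h"] \<open>0 < h\<close> \<open>h < d\<close> by (auto simp: dist_real_def)
  ultimately show False by (smt (verit) dist_commute dist_triangle)
qed

text \<open>With \<open>2\<alpha>' = cis \<psi> - cis \<phi> = 2\<i> cis ((\<psi> + \<phi>)/2) sin ((\<psi> - \<phi>)/2)\<close>, the half sum \<open>(\<psi> + \<phi>)/2 \<plusminus> \<pi>/2\<close>
  lifts the unit tangent, the sign being that of the never-vanishing \<open>sin ((\<psi> - \<phi>)/2)\<close>.\<close>

lemma rotation_index_half_cis_diff:
  fixes \<psi> \<phi> :: "real \<Rightarrow> real"
  assumes c\<psi>: "continuous_on UNIV \<psi>" and c\<phi>: "continuous_on UNIV \<phi>"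
    and \<alpha>': "\<And>x. vector_derivative \<alpha> (at x) = (cis (\<psi> x) - cis (\<phi> x)) / 2"
    and nz: "\<And>x. vector_derivative \<alpha> (at x) \<noteq> 0"
  shows "rotation_index \<alpha> L = ((\<psi> L + \<phi> L) - (\<psi> 0 + \<phi> 0)) / (4 * pi)"
proof -
  define M where "M x = (\<psi> x + \<phi> x) / 2" for x
  define h where "h x = sin ((\<psi> x - \<phi> x) / 2)" for x
  have polar: "vector_derivative \<alpha> (at x) = \<i> * cis (M x) * complex_of_real (h x)" for x
    unfolding \<alpha>' cis_diff_eq M_def h_def by simp
  have h_nz: "h x \<noteq> 0" for x using nz[of x] unfolding polar by auto
  have "continuous_on UNIV h" unfolding h_def using c\<psi> c\<phi> by (intro continuous_intros) auto
  define \<sigma> where "\<sigma> = sgn (h 0)"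
  have \<sigma>: "sgn (h x) = \<sigma>" for x
    using continuous_nonvanishing_sign[OF \<open>continuous_on UNIV h\<close> h_nz, of x 0] h_nz[of x] h_nz[of 0]
    unfolding \<sigma>_def by (auto simp: sgn_real_def)
  define \<theta> where "\<theta> x = M x + \<sigma> * pi / 2" for x
  have "cis (\<sigma> * pi / 2) = \<i> * complex_of_real \<sigma>"
    using h_nz[of 0] unfolding \<sigma>_def by (cases "0 < h 0") (simp_all add: complex_eq_iff)
  have "sgn (vector_derivative \<alpha> (at x)) = cis (\<theta> x)" for x
  proof -
    have "sgn (vector_derivative \<alpha> (at x)) = \<i> * cis (M x) * complex_of_real (sgn (h x))"
      unfolding polar using sgn_div_norm[of \<i>] by (simp add: sgn_mult sgn_of_real)
    also have "\<dots> = cis (M x) * cis (\<sigma> * pi / 2)" using \<sigma>[of x] \<open>cis (\<sigma> * pi / 2) = _\<close> by simp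
    finally show ?thesis unfolding \<theta>_def by (simp add: cis_mult)
  qed
  moreover have "continuous_on UNIV \<theta>" unfolding \<theta>_def M_def using c\<psi> c\<phi> by (intro continuous_intros) auto
  ultimately have "rotation_index \<alpha> L = (\<theta> L - \<theta> 0) / (2 * pi)" by (intro rotation_index_eq_lift)
  then show ?thesis unfolding \<theta>_def M_def by (simp add: field_simps)
qed

text \<open>Each of \<open>\<psi>, \<phi>\<close> gains a multiple \<open>2\<pi>m, 2\<pi>n\<close> over a period; zero rotation index forces \<open>m + n = 0\<close>,
  and since \<open>(\<psi> - \<phi>)/2\<close> never meets \<open>\<pi>\<int>\<close> its gain \<open>\<pi>(m - n)\<close> is less than \<open>\<pi>\<close>, so \<open>m = n\<close>.\<close>

lemma periodic_angles:
  fixes \<psi> \<phi> :: "real \<Rightarrow> real"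
  assumes c\<psi>: "continuous_on UNIV \<psi>" and c\<phi>: "continuous_on UNIV \<phi>"
    and per\<psi>: "\<And>x. cis (\<psi> (x + L)) = cis (\<psi> x)" and per\<phi>: "\<And>x. cis (\<phi> (x + L)) = cis (\<phi> x)"
    and ne: "\<And>x. cis (\<psi> x) \<noteq> cis (\<phi> x)"
    and sum: "\<psi> L + \<phi> L = \<psi> 0 + \<phi> 0"
  shows "\<psi> (x + L) = \<psi> x" and "\<phi> (x + L) = \<phi> x"
proof -
  obtain m :: int where m: "\<And>x. \<psi> (x + L) = \<psi> x + 2 * pi * m"
    using continuous_lift_shift[where f = \<psi>, OF c\<psi> per\<psi>] by blast
  obtain n :: int where n: "\<And>x. \<phi> (x + L) = \<phi> x + 2 * pi * n"
    using continuous_lift_shift[where f = \<phi>, OF c\<phi> per\<phi>] by blast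
  define D where "D x = (\<psi> x - \<phi> x) / 2" for x
  have "continuous_on UNIV D" unfolding D_def using c\<psi> c\<phi> by (intro continuous_intros) auto
  moreover have "sin (D x) \<noteq> 0" for x
    using ne[of x] cis_diff_eq[of "\<psi> x" "\<phi> x"] unfolding D_def by auto
  ultimately have "\<bar>D L - D 0\<bar> < pi" by (rule continuous_sin_nonvanishing_oscillation)
  moreover have "D L - D 0 = pi * of_int (m - n)" using m[of 0] n[of 0] unfolding D_def by (simp add: field_simps)
  ultimately have "\<bar>of_int (m - n) :: real\<bar> < 1" by (simp add: abs_mult)
  then have "m = n" by linarith
  moreover have "2 * pi * of_int (m + n) = 0" using sum m[of 0] n[of 0] by (simp add: field_simps)
  ultimately have "m = 0" "n = 0" by simp_all
  then show "\<psi> (x + L) = \<psi> x" "\<phi> (x + L) = \<phi> x" using m n by simp_all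
qed

lemma cis_angles_periodic:
  fixes \<alpha> \<beta> \<alpha>' :: "real \<Rightarrow> complex" and \<psi> \<phi> :: "real \<Rightarrow> real"
  assumes d\<alpha>: "\<And>x. (\<alpha> has_vector_derivative \<alpha>' x) (at x)"
    and per_\<alpha>: "\<And>x. \<alpha> (x + L) = \<alpha> x" and per_\<beta>: "\<And>x. \<beta> (x + L) = \<beta> x"
    and A: "\<And>x. \<alpha>' x + \<beta> x = cis (\<psi> x)" and B: "\<And>x. \<alpha>' x - \<beta> x = - cis (\<phi> x)"
  shows "cis (\<psi> (x + L)) = cis (\<psi> x)" and "cis (\<phi> (x + L)) = cis (\<phi> x)"
  using A[of "x + L"] B[of "x + L"] A[of x] B[of x]
  unfolding has_vector_derivative_periodic[OF d\<alpha> per_\<alpha>] per_\<beta> by simp_all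

lemma periodic_cis_integrals_eq:
  fixes \<alpha> \<alpha>' :: "real \<Rightarrow> complex" and \<psi> \<phi> :: "real \<Rightarrow> real"
  assumes d\<alpha>: "\<And>x. (\<alpha> has_vector_derivative \<alpha>' x) (at x)" and per_\<alpha>: "\<And>x. \<alpha> (x + L) = \<alpha> x"
    and "0 \<le> L" and c\<psi>: "continuous_on UNIV \<psi>"
    and diff: "\<And>x. cis (\<psi> x) - cis (\<phi> x) = 2 * \<alpha>' x"
  obtains I where "((\<lambda>x. cis (\<psi> x)) has_integral I) {0..L}" and "((\<lambda>x. cis (\<phi> x)) has_integral I) {0..L}"
proof -
  have int_diff: "((\<lambda>x. cis (\<psi> x) - cis (\<phi> x)) has_integral 0) {0..L}"
    using has_integral_mult_right[OF periodic_derivative_has_integral_0[OF d\<alpha> per_\<alpha> \<open>0 \<le> L\<close>], of 2]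
    unfolding diff by simp
  have "(\<lambda>x. cis (\<psi> x)) integrable_on {0..L}"
    by (intro integrable_continuous_interval continuous_intros continuous_on_subset[OF c\<psi>]) auto
  then have int\<psi>: "((\<lambda>x. cis (\<psi> x)) has_integral integral {0..L} (\<lambda>x. cis (\<psi> x))) {0..L}"
    by (rule integrable_integral)
  show ?thesis using that[OF int\<psi>] has_integral_diff[OF int\<psi> int_diff] by simp
qed

theorem lemma2p10:
  fixes L :: real and \<alpha> \<beta> :: "real \<Rightarrow> complex" and \<psi> \<psi>t :: "real \<Rightarrow> real"
  assumes L: "L > 0"
    and smooth_\<alpha>: "smooth_fun \<alpha>" and smooth_\<beta>: "smooth_fun \<beta>"
    and per_\<alpha>: "\<And>x. \<alpha> (x + L) = \<alpha> x" and per_\<beta>: "\<And>x. \<beta> (x + L) = \<beta> x"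
    and nz: "\<And>x. vector_derivative \<alpha> (at x) \<noteq> 0"
    and orth: "\<And>x. \<beta> x \<bullet> vector_derivative \<alpha> (at x) = 0"
    and unit: "\<And>x. (norm (vector_derivative \<alpha> (at x)))\<^sup>2 + (norm (\<beta> x))\<^sup>2 = 1"
    and smooth_\<psi>: "smooth_fun \<psi>" and smooth_\<psi>t: "smooth_fun \<psi>t"
    and a: "\<And>x. vector_derivative \<alpha> (at x) + \<beta> x = Complex (cos (\<psi> x)) (sin (\<psi> x))"
    and b: "\<And>x. vector_derivative \<alpha> (at x) - \<beta> x = - Complex (cos (\<psi>t x)) (sin (\<psi>t x))"
    and rot: "rotation_index \<alpha> L = 0"
    and cont: "unit_tangent_continuous \<alpha> \<beta>"
  shows "\<not> (\<exists>s0 s1. 0 < s1 - s0 \<and> s1 - s0 < L \<and> \<psi> s0 = \<psi>t r \<and> \<psi> s1 = \<psi>t r)"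
proof -
  obtain \<alpha>' where d\<alpha>: "\<And>x. (\<alpha> has_vector_derivative \<alpha>' x) (at x)"
    using smooth_fun_has_continuous_derivative[OF smooth_\<alpha>] by blast
  obtain d\<psi> where d\<psi>: "\<And>x. (\<psi> has_real_derivative d\<psi> x) (at x)" and cd\<psi>: "continuous_on UNIV d\<psi>"
    and c\<psi>: "continuous_on UNIV \<psi>" using smooth_fun_has_continuous_real_derivative[OF smooth_\<psi>] by blast
  obtain d\<psi>t where d\<psi>t: "\<And>x. (\<psi>t has_real_derivative d\<psi>t x) (at x)" and c\<psi>t: "continuous_on UNIV \<psi>t"
    using smooth_fun_has_continuous_real_derivative[OF smooth_\<psi>t] by blast
  have c\<beta>: "continuous_on UNIV \<beta>" using smooth_fun_has_continuous_derivative[OF smooth_\<beta>] by blast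
  have \<alpha>': "vector_derivative \<alpha> (at x) = \<alpha>' x" for x using d\<alpha> by (rule vector_derivative_at)
  have cis: "Complex (cos y) (sin y) = cis y" for y by (simp add: complex_eq_iff)
  have A: "\<alpha>' x + \<beta> x = cis (\<psi> x)" and B: "\<alpha>' x - \<beta> x = - cis (\<psi>t x)" for x
    using a[of x] b[of x] by (simp_all only: \<alpha>' cis)
  have "cis (\<psi> x) - cis (\<psi>t x) = (\<alpha>' x + \<beta> x) + (\<alpha>' x - \<beta> x)" for x unfolding A B by simp
  then have diff: "cis (\<psi> x) - cis (\<psi>t x) = 2 * \<alpha>' x" for x by simp
  then have half: "vector_derivative \<alpha> (at x) = (cis (\<psi> x) - cis (\<psi>t x)) / 2" for x unfolding \<alpha>' by simp
  have ne: "cis (\<psi> x) \<noteq> cis (\<psi>t x)" for x using nz[of x] unfolding half by simp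
  have "\<psi> L + \<psi>t L = \<psi> 0 + \<psi>t 0" using rot unfolding rotation_index_half_cis_diff[OF c\<psi> c\<psi>t half nz] by simp
  then have per\<psi>: "\<psi> (x + L) = \<psi> x" and per\<psi>t: "\<psi>t (x + L) = \<psi>t x" for x
    using periodic_angles[OF c\<psi> c\<psi>t cis_angles_periodic[OF d\<alpha> per_\<alpha> per_\<beta> A B] ne] by blast+
  obtain I where int\<psi>: "((\<lambda>x. cis (\<psi> x)) has_integral I) {0..L}" and int\<psi>t: "((\<lambda>x. cis (\<psi>t x)) has_integral I) {0..L}"
    using periodic_cis_integrals_eq[OF d\<alpha> per_\<alpha> _ c\<psi> diff] L by auto
  have gs: "gam_s \<alpha> \<beta> t s = (cis (\<psi> (s + t)) - cis (\<psi>t (s - t))) / 2" for t s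
    unfolding gam_s_eq[OF d\<alpha> c\<beta>] A B by simp
  have "\<psi> s \<noteq> \<psi>t r" for s
    using periodic_angles_no_common_value[OF L d\<psi> cd\<psi> d\<psi>t per\<psi> per\<psi>t int\<psi> int\<psi>t ne
        unit_tangent_continuous_no_opposite_crossing[OF cont gs d\<psi> d\<psi>t]] .
  then show ?thesis by blast
qed

end
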